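(* Every perinormal domain $R$ satisfies (R$_1$), i.e., $R_{\mathfrak{p}}$ is a valuation domain for every height one prime $\mathfrak{p}$ of $R$.
   Context: All rings are commutative with identity; "local" means having a unique maximal ideal; an overring of a domain $R$ is a ring between $R$ and its fraction field. A ring extension $A \subseteq B$ satisfies going-down if whenever $\mathfrak{p} \subset \mathfrak{q}$ are primes of $A$ and $Q$ is a prime of $B$ with $Q \cap A = \mathfrak{q}$, there is a prime $P \subseteq Q$ of $B$ with $P \cap A = \mathfrak{p}$. A domain $R$ is perinormal if every local overring $S$ of $R$ such that $R \subseteq S$ satisfies going-down is a localization of $R$. *)

theory Defs
  imports "HOL-Computational_Algebra.Fraction_Field"
begin

text \<open>The domain R is the type 'a :: idom; its fraction field is 'a fract.
Overrings are subsets of 'a fract containing the image of R.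
Ideals/primes of R are ideals/primes of the subring UNIV :: 'a set.\<close>

definition subring_of :: "'b::comm_ring_1 set \<Rightarrow> bool" where
  "subring_of S \<longleftrightarrow> 0 \<in> S \<and> 1 \<in> S \<and>
     (\<forall>x\<in>S. \<forall>y\<in>S. x + y \<in> S \<and> x - y \<in> S \<and> x * y \<in> S)"

definition ideal_in :: "'b::comm_ring_1 set \<Rightarrow> 'b set \<Rightarrow> bool" where
  "ideal_in S I \<longleftrightarrow> I \<subseteq> S \<and> 0 \<in> I \<and>
     (\<forall>x\<in>I. \<forall>y\<in>I. x + y \<in> I) \<and> (\<forall>x\<in>I. - x \<in> I) \<and>
     (\<forall>s\<in>S. \<forall>x\<in>I. s * x \<in> I)"

definition prime_in :: "'b::comm_ring_1 set \<Rightarrow> 'b set \<Rightarrow> bool" where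
  "prime_in S P \<longleftrightarrow> ideal_in S P \<and> P \<noteq> S \<and>
     (\<forall>a\<in>S. \<forall>b\<in>S. a * b \<in> P \<longrightarrow> a \<in> P \<or> b \<in> P)"

definition maximal_in :: "'b::comm_ring_1 set \<Rightarrow> 'b set \<Rightarrow> bool" where
  "maximal_in S M \<longleftrightarrow> ideal_in S M \<and> M \<noteq> S \<and>
     (\<forall>J. ideal_in S J \<and> M \<subseteq> J \<and> J \<noteq> S \<longrightarrow> J = M)"

definition local_ring :: "'b::comm_ring_1 set \<Rightarrow> bool" where
  "local_ring S \<longleftrightarrow> (\<exists>!M. maximal_in S M)"

definition emb :: "'a::idom \<Rightarrow> 'a fract" where
  "emb a = Fract a 1"

definition overring :: "'a::idom fract set \<Rightarrow> bool" where
  "overring S \<longleftrightarrow> subring_of S \<and> range emb \<subseteq> S"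

definition contract :: "'a::idom fract set \<Rightarrow> 'a set" where
  "contract P = {a. emb a \<in> P}"

definition going_down :: "'a::idom fract set \<Rightarrow> bool" where
  "going_down S \<longleftrightarrow>
     (\<forall>p q Q. prime_in (UNIV :: 'a set) p \<and> prime_in (UNIV :: 'a set) q \<and> p \<subset> q \<and>
        prime_in S Q \<and> contract Q = q \<longrightarrow>
        (\<exists>P. prime_in S P \<and> P \<subseteq> Q \<and> contract P = p))"

definition multiplicative :: "'a::idom set \<Rightarrow> bool" where
  "multiplicative M \<longleftrightarrow> 1 \<in> M \<and> 0 \<notin> M \<and> (\<forall>x\<in>M. \<forall>y\<in>M. x * y \<in> M)"

definition localization :: "'a::idom set \<Rightarrow> 'a fract set" where
  "localization M = {Fract a s | a s. s \<in> M}"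

definition is_localization :: "'a::idom fract set \<Rightarrow> bool" where
  "is_localization S \<longleftrightarrow> (\<exists>M. multiplicative M \<and> S = localization M)"

definition perinormal :: "'a::idom itself \<Rightarrow> bool" where
  "perinormal TYPE('a) \<longleftrightarrow>
     (\<forall>S :: 'a fract set. overring S \<and> local_ring S \<and> going_down S \<longrightarrow> is_localization S)"

definition height_one_prime :: "'a::idom set \<Rightarrow> bool" where
  "height_one_prime p \<longleftrightarrow> prime_in UNIV p \<and> {0} \<subset> p \<and>
     \<not> (\<exists>q. prime_in UNIV q \<and> {0} \<subset> q \<and> q \<subset> p)"

definition localize_at :: "'a::idom set \<Rightarrow> 'a fract set" where
  "localize_at p = localization (- p)"

definition valuation_ring :: "'b::field set \<Rightarrow> bool" where
  "valuation_ring V \<longleftrightarrow> subring_of V \<and> (\<forall>x. x \<noteq> 0 \<longrightarrow> x \<in> V \<or> inverse x \<in> V)"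

end

theory Submission
  imports Defs "HOL-Computational_Algebra.Polynomial"
begin

text \<open>
Let \<open>A = R\<^sub>p\<close> with maximal ideal \<open>m = pR\<^sub>p\<close>. For \<open>y\<close> in the fraction field either \<open>1 \<in> m A[y]\<close>,
or \<open>m A[y]\<close> lies in a prime \<open>Q\<close> of \<open>A[y]\<close> and \<open>S = A[y]\<^sub>Q\<close> is a local overring of \<open>R\<close> whose
maximal ideal contracts to \<open>p\<close>. Since \<open>p\<close> has height one, going-down for \<open>R \<subseteq> S\<close> only asks
for a prime of \<open>S\<close> over \<open>0\<close>, and \<open>0\<close> itself is one. By perinormality \<open>S\<close> is a localization
\<open>M\<^sup>-\<^sup>1R\<close>, and \<open>M\<close> must avoid \<open>p\<close>, so \<open>y \<in> S \<subseteq> R\<^sub>p\<close>.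
Finally, \<open>1 \<in> m A[y]\<close> and \<open>1 \<in> m A[y\<^sup>-\<^sup>1]\<close> cannot both hold: from relations \<open>f(y) = 1\<close> and
\<open>g(y\<^sup>-\<^sup>1) = 1\<close> with coefficients in \<open>m\<close>, the one of larger degree can be shortened using the
other (since \<open>1 - g(0)\<close> is a unit), until a constant in \<open>m\<close> equals \<open>1\<close>.
\<close>

lemma ideal_in_subset: "ideal_in S I \<Longrightarrow> I \<subseteq> S"
  by (simp add: ideal_in_def)

lemma ideal_in_zero: "ideal_in S I \<Longrightarrow> 0 \<in> I"
  by (simp add: ideal_in_def)

lemma ideal_in_add: "ideal_in S I \<Longrightarrow> x \<in> I \<Longrightarrow> y \<in> I \<Longrightarrow> x + y \<in> I"
  by (simp add: ideal_in_def)

lemma ideal_in_uminus: "ideal_in S I \<Longrightarrow> x \<in> I \<Longrightarrow> - x \<in> I"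
  by (simp add: ideal_in_def)

lemma ideal_in_diff: "ideal_in S I \<Longrightarrow> x \<in> I \<Longrightarrow> y \<in> I \<Longrightarrow> x - y \<in> I"
  using ideal_in_add[of S I x "- y"] ideal_in_uminus[of S I y] by simp

lemma ideal_in_mult_left: "ideal_in S I \<Longrightarrow> s \<in> S \<Longrightarrow> x \<in> I \<Longrightarrow> s * x \<in> I"
  by (simp add: ideal_in_def)

lemma ideal_in_mult_right: "ideal_in S I \<Longrightarrow> s \<in> S \<Longrightarrow> x \<in> I \<Longrightarrow> x * s \<in> I"
  using ideal_in_mult_left[of S I s x] by (simp add: mult.commute)

lemma ideal_in_sum:
  assumes "ideal_in S I" "finite F" "\<And>i. i \<in> F \<Longrightarrow> f i \<in> I"
  shows "sum f F \<in> I"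
  using assms(2,3)
  by (induction F rule: finite_induct) (auto intro: ideal_in_zero[OF assms(1)] ideal_in_add[OF assms(1)])

lemma one_notin_proper_ideal:
  assumes "ideal_in S I" "I \<noteq> S"
  shows "1 \<notin> I"
proof
  assume "1 \<in> I"
  then have "S \<subseteq> I" using ideal_in_mult_right[OF assms(1), of _ 1] by fastforce
  then show False using assms ideal_in_subset by blast
qed

lemma prime_in_ideal: "prime_in S P \<Longrightarrow> ideal_in S P"
  by (simp add: prime_in_def)

lemma one_notin_prime: "prime_in S P \<Longrightarrow> 1 \<notin> P"
  unfolding prime_in_def using one_notin_proper_ideal by blast

lemma prime_in_mult_notin:
  "prime_in S P \<Longrightarrow> a \<in> S \<Longrightarrow> b \<in> S \<Longrightarrow> a \<notin> P \<Longrightarrow> b \<notin> P \<Longrightarrow> a * b \<notin> P"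
  unfolding prime_in_def by blast

lemma subring_of_zero: "subring_of S \<Longrightarrow> 0 \<in> S"
  by (simp add: subring_of_def)

lemma subring_of_one: "subring_of S \<Longrightarrow> 1 \<in> S"
  by (simp add: subring_of_def)

lemma ideal_in_self:
  assumes "subring_of S"
  shows "ideal_in S S"
  unfolding ideal_in_def
proof (intro conjI ballI)
  show "0 \<in> S" using assms by (rule subring_of_zero)
  fix x assume x: "x \<in> S"
  have "0 - x \<in> S" using assms x unfolding subring_of_def by blast
  then show "- x \<in> S" by simp
next
  fix x z assume "x \<in> S" "z \<in> S"
  then show "x + z \<in> S" "x * z \<in> S" using assms by (simp_all add: subring_of_def)
qed simp

lemma subring_of_if_ideal_in_self:
  assumes "ideal_in S S" "1 \<in> S"
  shows "subring_of S"
  unfolding subring_of_def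
proof (intro conjI ballI)
  show "0 \<in> S" using assms(1) by (rule ideal_in_zero)
  fix x y assume "x \<in> S" "y \<in> S"
  then show "x + y \<in> S" "x - y \<in> S" "x * y \<in> S"
    by (simp_all add: ideal_in_add[OF assms(1)] ideal_in_diff[OF assms(1)] ideal_in_mult_left[OF assms(1)])
qed (fact assms(2))

lemma prime_in_zero:
  fixes S :: "'b::idom set"
  assumes "subring_of S"
  shows "prime_in S {0}"
  unfolding prime_in_def ideal_in_def
  using subring_of_zero[OF assms] subring_of_one[OF assms] by auto

section \<open>Polynomial extensions\<close>

definition poly_values :: "'b::field set \<Rightarrow> 'b \<Rightarrow> 'b set" where
  "poly_values C y = {poly f y | f. \<forall>i. coeff f i \<in> C}"

lemma poly_valuesI: "(\<And>i. coeff f i \<in> C) \<Longrightarrow> poly f y \<in> poly_values C y"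
  unfolding poly_values_def by blast

lemma poly_valuesE:
  assumes "x \<in> poly_values C y"
  obtains f where "x = poly f y" "\<And>i. coeff f i \<in> C"
  using assms unfolding poly_values_def by auto

text \<open>For an ideal \<open>C\<close> of \<open>A\<close>, \<open>poly_values C y\<close> is the extended ideal \<open>C A[y]\<close>.\<close>

lemma ideal_in_poly_values:
  assumes C: "ideal_in A C"
  shows "ideal_in (poly_values A y) (poly_values C y)"
  unfolding ideal_in_def
proof (intro conjI ballI)
  show "poly_values C y \<subseteq> poly_values A y"
    using ideal_in_subset[OF C] by (auto simp: poly_values_def)
  have "poly 0 y \<in> poly_values C y" by (rule poly_valuesI) (simp add: ideal_in_zero[OF C])
  then show "0 \<in> poly_values C y" by simp
next
  fix x z assume "x \<in> poly_values C y" "z \<in> poly_values C y"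
  then obtain f g where fg: "x = poly f y" "\<And>i. coeff f i \<in> C" "z = poly g y" "\<And>i. coeff g i \<in> C"
    by (metis poly_valuesE)
  have "poly (f + g) y \<in> poly_values C y" by (rule poly_valuesI) (simp add: ideal_in_add[OF C] fg)
  then show "x + z \<in> poly_values C y" by (simp add: fg)
next
  fix x assume "x \<in> poly_values C y"
  then obtain f where f: "x = poly f y" "\<And>i. coeff f i \<in> C"
    by (metis poly_valuesE)
  have "poly (- f) y \<in> poly_values C y" by (rule poly_valuesI) (simp add: ideal_in_uminus[OF C] f)
  then show "- x \<in> poly_values C y" by (simp add: f)
next
  fix x z assume "x \<in> poly_values A y" "z \<in> poly_values C y"
  then obtain f g where fg: "x = poly f y" "\<And>i. coeff f i \<in> A" "z = poly g y" "\<And>i. coeff g i \<in> C"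
    by (metis poly_valuesE)
  have "poly (f * g) y \<in> poly_values C y"
  proof (rule poly_valuesI)
    fix n
    show "coeff (f * g) n \<in> C" unfolding coeff_mult
      by (rule ideal_in_sum[OF C]) (simp_all add: ideal_in_mult_left[OF C] fg)
  qed
  then show "x * z \<in> poly_values C y" by (simp add: fg)
qed

lemma const_in_poly_values: "0 \<in> C \<Longrightarrow> a \<in> C \<Longrightarrow> a \<in> poly_values C y"
  using poly_valuesI[of "[:a:]" C y] by (simp add: coeff_pCons split: nat.split)

lemma var_in_poly_values: "0 \<in> A \<Longrightarrow> 1 \<in> A \<Longrightarrow> y \<in> poly_values A y"
  using poly_valuesI[of "[:0, 1:]" A y] by (simp add: coeff_pCons split: nat.split)

lemma subring_of_poly_values:
  assumes "subring_of A"
  shows "subring_of (poly_values A y)"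
  by (rule subring_of_if_ideal_in_self[OF ideal_in_poly_values[OF ideal_in_self[OF assms]]
        const_in_poly_values[OF subring_of_zero[OF assms] subring_of_one[OF assms]]])

lemma subset_poly_values: "0 \<in> A \<Longrightarrow> A \<subseteq> poly_values A y"
  using const_in_poly_values by blast

context
  fixes A m :: "'b::field set"
  assumes A: "subring_of A" and m: "ideal_in A m" and one_notin_m: "1 \<notin> m"
    and inverse_one_minus: "\<And>v. v \<in> m \<Longrightarrow> inverse (1 - v) \<in> A"
begin

text \<open>Reflecting \<open>1 - g\<close> turns \<open>g(x\<^sup>-\<^sup>1) = 1\<close> into an equation for \<open>x\<close> over \<open>A\<close> whose leading
  coefficient \<open>1 - g(0)\<close> is a unit of \<open>A\<close>; normalizing and shifting it gives degree \<open>n\<close>.\<close>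

lemma monic_equation_from_inverse:
  assumes x: "x \<noteq> 0" and g: "\<And>i. coeff g i \<in> m" and pg: "poly g (inverse x) = 1"
    and deg: "degree g \<le> n"
  obtains H where "\<And>i. coeff H i \<in> A" "degree H \<le> n" "coeff H n = 1" "poly H x = 0"
proof -
  have mA: "\<And>v. v \<in> m \<Longrightarrow> v \<in> A" using ideal_in_subset[OF m] by blast
  define G where "G = 1 - g"
  define K where "K = degree G"
  have Kn: "K \<le> n" using degree_diff_le_max[of 1 g] deg by (simp add: K_def G_def)
  define u where "u = 1 - coeff g 0"
  have cG: "coeff G i = (if i = 0 then 1 else 0) - coeff g i" for i by (simp add: G_def)
  have cGA: "coeff G i \<in> A" for i
    using mA[OF g[of i]] A unfolding cG subring_of_def by auto
  have u0: "u \<noteq> 0" using g[of 0] one_notin_m by (auto simp: u_def)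
  have uA: "inverse u \<in> A" unfolding u_def by (rule inverse_one_minus[OF g])
  define R where "R = smult (inverse u) (reflect_poly G)"
  have cR: "coeff R i = inverse u * (if i > K then 0 else coeff G (K - i))" for i
    by (simp add: R_def K_def coeff_reflect_poly)
  have cRA: "coeff R i \<in> A" for i
    unfolding cR using cGA uA subring_of_zero[OF A] by (simp add: ideal_in_mult_left[OF ideal_in_self[OF A]])
  have cRK: "coeff R K = 1" unfolding cR using u0 by (simp add: cG u_def)
  have pR: "poly R x = 0"
    unfolding R_def using x by (simp add: poly_reflect_poly_nz G_def pg K_def)
  have dR: "degree R \<le> K"
    unfolding R_def K_def by (meson degree_smult_le degree_reflect_poly_le order_trans)
  define H where "H = monom 1 (n - K) * R"
  have cH: "coeff H i = (if i < n - K then 0 else coeff R (i - (n - K)))" for i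
    unfolding H_def by (simp add: coeff_monom_mult)
  have "degree H \<le> degree (monom (1::'b) (n - K)) + degree R"
    unfolding H_def by (rule degree_mult_le)
  also have "\<dots> \<le> n" using dR degree_monom_le[of "1::'b" "n - K"] Kn by linarith
  finally have "degree H \<le> n" .
  moreover have "coeff H i \<in> A" for i unfolding cH using cRA subring_of_zero[OF A] by simp
  moreover have "coeff H n = 1" unfolding cH using Kn cRK by simp
  moreover have "poly H x = 0" unfolding H_def using pR by simp
  ultimately show thesis using that by blast
qed

lemma poly_eq_one_degree_reduction:
  assumes x: "x \<noteq> 0"
    and f: "\<And>i. coeff f i \<in> m" and pf: "poly f x = 1"
    and g: "\<And>i. coeff g i \<in> m" and pg: "poly g (inverse x) = 1"
    and deg: "degree g \<le> degree f"
  obtains f' where "\<And>i. coeff f' i \<in> m" "poly f' x = 1" "degree f' < degree f"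
proof -
  define n where "n = degree f"
  obtain H where cHA: "\<And>i. coeff H i \<in> A" and dH: "degree H \<le> n"
    and cHn: "coeff H n = 1" and pH: "poly H x = 0"
    using monic_equation_from_inverse[OF x g pg] deg unfolding n_def by blast
  define f' where "f' = f - smult (coeff f n) H"
  have cf': "coeff f' i \<in> m" for i
    unfolding f'_def using f cHA by (simp add: ideal_in_diff[OF m] ideal_in_mult_right[OF m])
  have pf': "poly f' x = 1" unfolding f'_def using pf pH by simp
  have "degree f' \<le> n" unfolding f'_def
    using degree_diff_le[of f n "smult (coeff f n) H"] degree_smult_le[of "coeff f n" H] dH n_def
    by simp
  moreover have "coeff f' n = 0" unfolding f'_def using cHn by simp
  moreover have "f' \<noteq> 0" using pf' by auto
  ultimately have "degree f' < n" using leading_coeff_0_iff le_neq_implies_less by metis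
  then show thesis using that cf' pf' n_def by blast
qed

lemma one_notin_poly_values_or_inverse:
  assumes "x \<noteq> 0"
  shows "1 \<notin> poly_values m x \<or> 1 \<notin> poly_values m (inverse x)"
proof -
  have False if "x \<noteq> 0" "\<forall>i. coeff f i \<in> m" "poly f x = 1"
    "\<forall>i. coeff g i \<in> m" "poly g (inverse x) = 1" for f g x
    using that
  proof (induction "degree f + degree g" arbitrary: f g x rule: less_induct)
    case less
    show False
    proof (cases "degree g \<le> degree f")
      case True
      then obtain f' where "\<forall>i. coeff f' i \<in> m" "poly f' x = 1" "degree f' < degree f"
        using poly_eq_one_degree_reduction less.prems by metis
      then show False using less.hyps[of f' g x] less.prems by simp
    next
      case False
      have "inverse x \<noteq> 0" "inverse (inverse x) = x" using less.prems(1) by simp_all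
      then obtain g' where "\<forall>i. coeff g' i \<in> m" "poly g' (inverse x) = 1" "degree g' < degree g"
        using poly_eq_one_degree_reduction[of "inverse x" g f] less.prems False by auto
      then show False using less.hyps[of f g' x] less.prems by simp
    qed
  qed
  then show ?thesis using assms unfolding poly_values_def by fastforce
qed

end

lemma ideal_in_Union_chain:
  assumes "\<C> \<noteq> {}" "\<And>X. X \<in> \<C> \<Longrightarrow> ideal_in B X" "subset.chain \<C> \<C>"
  shows "ideal_in B (\<Union>\<C>)"
  unfolding ideal_in_def
proof (intro conjI ballI)
  have lin: "\<And>X Y. X \<in> \<C> \<Longrightarrow> Y \<in> \<C> \<Longrightarrow> X \<subseteq> Y \<or> Y \<subseteq> X"
    using assms(3) unfolding subset_chain_def by blast
  show "\<Union>\<C> \<subseteq> B" using assms(2) ideal_in_subset by blast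
  show "0 \<in> \<Union>\<C>" using assms(1,2) ideal_in_zero by blast
  fix x y assume "x \<in> \<Union>\<C>" "y \<in> \<Union>\<C>"
  then obtain X Y where XY: "X \<in> \<C>" "Y \<in> \<C>" "x \<in> X" "y \<in> Y" by blast
  with lin consider "X \<subseteq> Y" | "Y \<subseteq> X" by blast
  then show "x + y \<in> \<Union>\<C>"
    by cases (use XY assms(2) ideal_in_add in blast)+
next
  fix x assume "x \<in> \<Union>\<C>"
  then show "- x \<in> \<Union>\<C>" using assms(2) ideal_in_uminus by blast
next
  fix s x assume "s \<in> B" "x \<in> \<Union>\<C>"
  then show "s * x \<in> \<Union>\<C>" using assms(2) ideal_in_mult_left by blast
qed

lemma ideal_in_add_principal:
  assumes B: "subring_of B" and M: "ideal_in B M" and a: "a \<in> B"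
  shows "ideal_in B {q + a * r | q r. q \<in> M \<and> r \<in> B}" (is "ideal_in B ?J")
  unfolding ideal_in_def
proof (intro conjI ballI)
  have BI: "ideal_in B B" using B by (rule ideal_in_self)
  show "?J \<subseteq> B"
    using ideal_in_subset[OF M] a ideal_in_add[OF BI] ideal_in_mult_left[OF BI] by blast
  have "0 + a * 0 \<in> ?J" using ideal_in_zero[OF M] subring_of_zero[OF B] by blast
  then show "0 \<in> ?J" by simp
next
  fix z w assume "z \<in> ?J" "w \<in> ?J"
  then obtain q r q' r' where "z = q + a * r" "q \<in> M" "r \<in> B" "w = q' + a * r'" "q' \<in> M" "r' \<in> B"
    by blast
  moreover have "q + a * r + (q' + a * r') = (q + q') + a * (r + r')" by (simp add: algebra_simps)
  ultimately show "z + w \<in> ?J" using ideal_in_add[OF M] B unfolding subring_of_def by blast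
next
  fix z assume "z \<in> ?J"
  then obtain q r where "z = q + a * r" "q \<in> M" "r \<in> B" by blast
  moreover have "- (q + a * r) = (- q) + a * (- r)" by (simp add: algebra_simps)
  ultimately show "- z \<in> ?J" using ideal_in_uminus[OF M] ideal_in_uminus[OF ideal_in_self[OF B]] by blast
next
  fix s z assume s: "s \<in> B" and "z \<in> ?J"
  then obtain q r where "z = q + a * r" "q \<in> M" "r \<in> B" by blast
  moreover have "s * (q + a * r) = (s * q) + a * (s * r)" by (simp add: algebra_simps)
  ultimately show "s * z \<in> ?J" using ideal_in_mult_left[OF M s] s B unfolding subring_of_def by blast
qed

lemma prime_in_if_maximal_avoiding_one:
  assumes B: "subring_of B" and M: "ideal_in B M" "1 \<notin> M"
    and max: "\<And>J. ideal_in B J \<Longrightarrow> M \<subseteq> J \<Longrightarrow> 1 \<notin> J \<Longrightarrow> J = M"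
  shows "prime_in B M"
  unfolding prime_in_def
proof (intro conjI ballI impI)
  show "M \<noteq> B" using M(2) subring_of_one[OF B] by blast
  fix a b assume a: "a \<in> B" and b: "b \<in> B" and ab: "a * b \<in> M"
  show "a \<in> M \<or> b \<in> M"
  proof (rule ccontr)
    assume nab: "\<not> (a \<in> M \<or> b \<in> M)"
    define J where "J = {q + a * r | q r. q \<in> M \<and> r \<in> B}"
    have J: "ideal_in B J" unfolding J_def using B M(1) a by (rule ideal_in_add_principal)
    have "q + a * 0 \<in> J" if "q \<in> M" for q using that subring_of_zero[OF B] unfolding J_def by blast
    then have MJ: "M \<subseteq> J" by auto
    have "0 + a * 1 \<in> J" unfolding J_def using subring_of_one[OF B] ideal_in_zero[OF M(1)] by blast
    then have "J \<noteq> M" using nab by auto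
    then have "1 \<in> J" using max[OF J MJ] by blast
    then obtain q r where qr: "1 = q + a * r" "q \<in> M" "r \<in> B" unfolding J_def by blast
    have "b = b * q + (a * b) * r" using qr(1) by (metis mult.assoc mult.commute mult_1_right distrib_left)
    moreover have "b * q \<in> M" using ideal_in_mult_left[OF M(1) b qr(2)] .
    moreover have "(a * b) * r \<in> M" using ideal_in_mult_right[OF M(1) qr(3) ab] .
    ultimately have "b \<in> M" using ideal_in_add[OF M(1)] by metis
    then show False using nab by blast
  qed
qed (fact M(1))

lemma prime_in_containing_ideal:
  assumes B: "subring_of B" and I: "ideal_in B I" "1 \<notin> I"
  obtains Q where "prime_in B Q" "I \<subseteq> Q"
proof -
  define \<A> where "\<A> = {J. ideal_in B J \<and> I \<subseteq> J \<and> 1 \<notin> J}"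
  have "\<Union>\<C> \<in> \<A>" if "\<C> \<noteq> {}" "subset.chain \<A> \<C>" for \<C>
  proof -
    have "subset.chain \<C> \<C>" "\<And>X. X \<in> \<C> \<Longrightarrow> ideal_in B X \<and> I \<subseteq> X \<and> 1 \<notin> X"
      using that(2) unfolding subset_chain_def \<A>_def by blast+
    then show ?thesis using that(1) ideal_in_Union_chain[of \<C> B] unfolding \<A>_def by blast
  qed
  moreover have "\<A> \<noteq> {}" using I unfolding \<A>_def by blast
  ultimately obtain M where M: "M \<in> \<A>" and max: "\<And>X. X \<in> \<A> \<Longrightarrow> M \<subseteq> X \<Longrightarrow> X = M"
    using subset_Zorn_nonempty[of \<A>] by blast
  have "prime_in B M"
    using M max by (intro prime_in_if_maximal_avoiding_one[OF B]) (auto simp: \<A>_def)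
  then show thesis using that M unfolding \<A>_def by blast
qed

section \<open>Localizing a subring of a field at a prime\<close>

definition localize_subring :: "'b::field set \<Rightarrow> 'b set \<Rightarrow> 'b set" where
  "localize_subring B Q = {f / g | f g. f \<in> B \<and> g \<in> B \<and> g \<notin> Q}"

definition localize_subring_max :: "'b::field set \<Rightarrow> 'b set \<Rightarrow> 'b set" where
  "localize_subring_max B Q = {f / g | f g. f \<in> Q \<and> g \<in> B \<and> g \<notin> Q}"

context
  fixes B Q :: "'b::field set"
  assumes B: "subring_of B" and Q: "prime_in B Q"
begin

private lemma QI: "ideal_in B Q"
  using Q by (rule prime_in_ideal)

private lemma BI: "ideal_in B B"
  using B by (rule ideal_in_self)

private lemma nonzero_if_notin: "g \<notin> Q \<Longrightarrow> g \<noteq> 0"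
  using ideal_in_zero[OF QI] by blast

private lemma denominators_mult:
  "g \<in> B \<Longrightarrow> g' \<in> B \<Longrightarrow> g \<notin> Q \<Longrightarrow> g' \<notin> Q \<Longrightarrow> g * g' \<in> B \<and> g * g' \<notin> Q"
  using prime_in_mult_notin[OF Q] ideal_in_mult_left[OF BI] by blast

lemma localize_subringI: "f \<in> B \<Longrightarrow> g \<in> B \<Longrightarrow> g \<notin> Q \<Longrightarrow> f / g \<in> localize_subring B Q"
  unfolding localize_subring_def by blast

lemma localize_subring_maxI: "f \<in> Q \<Longrightarrow> g \<in> B \<Longrightarrow> g \<notin> Q \<Longrightarrow> f / g \<in> localize_subring_max B Q"
  unfolding localize_subring_max_def by blast

lemma subset_localize_subring: "B \<subseteq> localize_subring B Q"
  using localize_subringI[of _ 1] subring_of_one[OF B] one_notin_prime[OF Q] by fastforce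

lemma subset_localize_subring_max: "Q \<subseteq> localize_subring_max B Q"
  using localize_subring_maxI[of _ 1] subring_of_one[OF B] one_notin_prime[OF Q] by fastforce

lemma subring_of_localize_subring: "subring_of (localize_subring B Q)"
  unfolding subring_of_def
proof (intro conjI ballI)
  show "0 \<in> localize_subring B Q" "1 \<in> localize_subring B Q"
    using subset_localize_subring subring_of_zero[OF B] subring_of_one[OF B] by blast+
  fix x y assume "x \<in> localize_subring B Q" "y \<in> localize_subring B Q"
  then obtain f g f' g' where fg: "x = f / g" "f \<in> B" "g \<in> B" "g \<notin> Q"
    "y = f' / g'" "f' \<in> B" "g' \<in> B" "g' \<notin> Q"
    unfolding localize_subring_def by blast
  have g0: "g \<noteq> 0" "g' \<noteq> 0" using nonzero_if_notin fg by blast+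
  have gg: "g * g' \<in> B" "g * g' \<notin> Q" using denominators_mult fg by blast+
  have "(f * g' + f' * g) / (g * g') \<in> localize_subring B Q"
    using fg gg by (intro localize_subringI) (simp_all add: ideal_in_add[OF BI] ideal_in_mult_left[OF BI])
  then show "x + y \<in> localize_subring B Q" using g0 unfolding fg(1,5) by (simp add: add_frac_eq)
  have "(f * g' - f' * g) / (g * g') \<in> localize_subring B Q"
    using fg gg by (intro localize_subringI) (simp_all add: ideal_in_diff[OF BI] ideal_in_mult_left[OF BI])
  then show "x - y \<in> localize_subring B Q" using g0 unfolding fg(1,5) by (simp add: diff_frac_eq)
  have "(f * f') / (g * g') \<in> localize_subring B Q"
    using fg gg by (intro localize_subringI) (simp_all add: ideal_in_mult_left[OF BI])
  then show "x * y \<in> localize_subring B Q" unfolding fg(1,5) by simp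
qed

lemma ideal_in_localize_subring_max: "ideal_in (localize_subring B Q) (localize_subring_max B Q)"
  unfolding ideal_in_def
proof (intro conjI ballI)
  show "localize_subring_max B Q \<subseteq> localize_subring B Q"
    unfolding localize_subring_max_def localize_subring_def using ideal_in_subset[OF QI] by blast
  show "0 \<in> localize_subring_max B Q" using subset_localize_subring_max ideal_in_zero[OF QI] by blast
next
  fix x y assume "x \<in> localize_subring_max B Q" "y \<in> localize_subring_max B Q"
  then obtain f g f' g' where fg: "x = f / g" "f \<in> Q" "g \<in> B" "g \<notin> Q"
    "y = f' / g'" "f' \<in> Q" "g' \<in> B" "g' \<notin> Q"
    unfolding localize_subring_max_def by blast
  have g0: "g \<noteq> 0" "g' \<noteq> 0" using nonzero_if_notin fg by blast+
  have gg: "g * g' \<in> B" "g * g' \<notin> Q" using denominators_mult fg by blast+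
  have "(f * g' + f' * g) / (g * g') \<in> localize_subring_max B Q"
    using fg gg by (intro localize_subring_maxI) (simp_all add: ideal_in_add[OF QI] ideal_in_mult_right[OF QI])
  then show "x + y \<in> localize_subring_max B Q" using g0 unfolding fg(1,5) by (simp add: add_frac_eq)
next
  fix x assume "x \<in> localize_subring_max B Q"
  then obtain f g where fg: "x = f / g" "f \<in> Q" "g \<in> B" "g \<notin> Q"
    unfolding localize_subring_max_def by blast
  have "(- f) / g \<in> localize_subring_max B Q"
    using fg by (intro localize_subring_maxI) (simp_all add: ideal_in_uminus[OF QI])
  then show "- x \<in> localize_subring_max B Q" using fg by simp
next
  fix s x assume "s \<in> localize_subring B Q" "x \<in> localize_subring_max B Q"
  then obtain f g f' g' where fg: "s = f / g" "f \<in> B" "g \<in> B" "g \<notin> Q"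
    "x = f' / g'" "f' \<in> Q" "g' \<in> B" "g' \<notin> Q"
    unfolding localize_subring_def localize_subring_max_def by blast
  have gg: "g * g' \<in> B" "g * g' \<notin> Q" using denominators_mult fg by blast+
  have "(f * f') / (g * g') \<in> localize_subring_max B Q"
    using fg gg by (intro localize_subring_maxI) (simp_all add: ideal_in_mult_left[OF QI])
  then show "s * x \<in> localize_subring_max B Q" unfolding fg(1,5) by simp
qed

lemma one_notin_localize_subring_max: "1 \<notin> localize_subring_max B Q"
proof
  assume "1 \<in> localize_subring_max B Q"
  then obtain f g where fg: "1 = f / g" "f \<in> Q" "g \<notin> Q"
    unfolding localize_subring_max_def by blast
  then have "g = f" using nonzero_if_notin[OF fg(3)] by (simp add: field_simps)
  then show False using fg by blast
qed

text \<open>Everything outside \<open>localize_subring_max B Q\<close> is a unit.\<close>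

lemma proper_ideal_subset_localize_subring_max:
  assumes J: "ideal_in (localize_subring B Q) J" "J \<noteq> localize_subring B Q"
  shows "J \<subseteq> localize_subring_max B Q"
proof
  fix z assume z: "z \<in> J"
  show "z \<in> localize_subring_max B Q"
  proof (rule ccontr)
    assume zN: "z \<notin> localize_subring_max B Q"
    obtain f g where fg: "z = f / g" "f \<in> B" "g \<in> B" "g \<notin> Q"
      using ideal_in_subset[OF J(1)] z unfolding localize_subring_def by blast
    have "f \<notin> Q" using zN fg localize_subring_maxI by blast
    then have "(g / f) * z \<in> J"
      using ideal_in_mult_left[OF J(1) _ z] fg localize_subringI by blast
    moreover have "f \<noteq> 0" "g \<noteq> 0" using nonzero_if_notin fg \<open>f \<notin> Q\<close> by blast+
    ultimately show False using one_notin_proper_ideal[OF J] fg by simp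
  qed
qed

lemma local_ring_localize_subring: "local_ring (localize_subring B Q)"
  unfolding local_ring_def
proof (rule ex1I[of _ "localize_subring_max B Q"])
  have "localize_subring_max B Q \<noteq> localize_subring B Q"
    using one_notin_localize_subring_max subring_of_localize_subring subring_of_one by blast
  then show "maximal_in (localize_subring B Q) (localize_subring_max B Q)"
    unfolding maximal_in_def using ideal_in_localize_subring_max proper_ideal_subset_localize_subring_max
    by blast
  fix M assume "maximal_in (localize_subring B Q) M"
  then show "M = localize_subring_max B Q"
    unfolding maximal_in_def
    using ideal_in_localize_subring_max proper_ideal_subset_localize_subring_max
      one_notin_localize_subring_max subring_of_localize_subring subring_of_one by metis
qed

lemma unit_notin_localize_subring_max:
  assumes "u \<noteq> 0" "inverse u \<in> B"
  shows "u \<notin> localize_subring_max B Q"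
proof
  assume "u \<in> localize_subring_max B Q"
  then obtain f g where fg: "u = f / g" "f \<in> Q" "g \<notin> Q"
    unfolding localize_subring_max_def by blast
  then have "g = f * inverse u" using assms(1) nonzero_if_notin[of g] by (auto simp: field_simps)
  then show False using ideal_in_mult_right[OF QI assms(2) fg(2)] fg(3) by simp
qed

lemma prime_in_localize_subring_subset:
  "prime_in (localize_subring B Q) P \<Longrightarrow> P \<subseteq> localize_subring_max B Q"
  unfolding prime_in_def using proper_ideal_subset_localize_subring_max by blast

end

section \<open>The localization at a prime of the domain\<close>

definition localize_at_max :: "'a::idom set \<Rightarrow> 'a fract set" where
  "localize_at_max p = {Fraction_Field.Fract a s | a s. a \<in> p \<and> s \<notin> p}"

lemma contract_zero: "contract {0 :: 'a::idom fract} = {0}"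
  unfolding contract_def emb_def by (auto simp: Zero_fract_def eq_fract)

lemma localize_atI: "s \<notin> p \<Longrightarrow> Fraction_Field.Fract a s \<in> localize_at p"
  unfolding localize_at_def localization_def by blast

lemma localize_atE:
  assumes "x \<in> localize_at p"
  obtains a s where "x = Fraction_Field.Fract a s" "s \<notin> p"
  using assms unfolding localize_at_def localization_def by blast

lemma localize_at_maxI: "a \<in> p \<Longrightarrow> s \<notin> p \<Longrightarrow> Fraction_Field.Fract a s \<in> localize_at_max p"
  unfolding localize_at_max_def by blast

lemma localize_at_maxE:
  assumes "x \<in> localize_at_max p"
  obtains a s where "x = Fraction_Field.Fract a s" "a \<in> p" "s \<notin> p"
  using assms unfolding localize_at_max_def by blast

context
  fixes p :: "'a::idom set"
  assumes p: "prime_in UNIV p"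
begin

private lemma pI: "ideal_in UNIV p"
  using p by (rule prime_in_ideal)

private lemma one_notin_p: "1 \<notin> p"
  using p by (rule one_notin_prime)

private lemma denominator_nonzero: "s \<notin> p \<Longrightarrow> s \<noteq> 0"
  using ideal_in_zero[OF pI] by blast

private lemma mult_notin: "s \<notin> p \<Longrightarrow> t \<notin> p \<Longrightarrow> s * t \<notin> p"
  using prime_in_mult_notin[OF p] by blast

lemma emb_in_localize_at: "emb a \<in> localize_at p"
  unfolding emb_def using localize_atI one_notin_p by blast

lemma inverse_emb_in_localize_at: "a \<notin> p \<Longrightarrow> inverse (emb a) \<in> localize_at p"
  using localize_atI[where s = a and a = 1] by (simp add: emb_def)

lemma subring_of_localize_at: "subring_of (localize_at p)"
  unfolding subring_of_def
proof (intro conjI ballI)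
  show "0 \<in> localize_at p" using emb_in_localize_at[of 0] by (simp add: emb_def Zero_fract_def)
  show "1 \<in> localize_at p" using emb_in_localize_at[of 1] by (simp add: emb_def One_fract_def)
  fix x y assume "x \<in> localize_at p" "y \<in> localize_at p"
  then obtain a s b t where ab: "x = Fraction_Field.Fract a s" "s \<notin> p" "y = Fraction_Field.Fract b t" "t \<notin> p"
    by (metis localize_atE)
  have "s \<noteq> 0" "t \<noteq> 0" "s * t \<notin> p" using denominator_nonzero mult_notin ab by blast+
  then show "x + y \<in> localize_at p" "x - y \<in> localize_at p" "x * y \<in> localize_at p"
    using localize_atI ab by simp_all
qed

lemma ideal_in_localize_at_max: "ideal_in (localize_at p) (localize_at_max p)"
  unfolding ideal_in_def
proof (intro conjI ballI)
  show "localize_at_max p \<subseteq> localize_at p"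
    using localize_atI unfolding localize_at_max_def by blast
  show "0 \<in> localize_at_max p"
    using localize_at_maxI[OF ideal_in_zero[OF pI] one_notin_p] by (simp add: Zero_fract_def)
next
  fix x y assume "x \<in> localize_at_max p" "y \<in> localize_at_max p"
  then obtain a s b t where ab: "x = Fraction_Field.Fract a s" "a \<in> p" "s \<notin> p" "y = Fraction_Field.Fract b t" "b \<in> p" "t \<notin> p"
    by (metis localize_at_maxE)
  have "s \<noteq> 0" "t \<noteq> 0" "s * t \<notin> p" using denominator_nonzero mult_notin ab by blast+
  moreover have "a * t + b * s \<in> p"
    using ab ideal_in_add[OF pI] ideal_in_mult_right[OF pI] by blast
  ultimately show "x + y \<in> localize_at_max p" using localize_at_maxI ab by simp
next
  fix x assume "x \<in> localize_at_max p"
  then show "- x \<in> localize_at_max p"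
    using localize_at_maxI ideal_in_uminus[OF pI] by (metis localize_at_maxE minus_fract)
next
  fix x y assume "x \<in> localize_at p" "y \<in> localize_at_max p"
  then obtain a s b t where ab: "x = Fraction_Field.Fract a s" "s \<notin> p" "y = Fraction_Field.Fract b t" "b \<in> p" "t \<notin> p"
    by (metis localize_atE localize_at_maxE)
  have "s * t \<notin> p" "a * b \<in> p" using mult_notin ideal_in_mult_left[OF pI] ab by blast+
  then show "x * y \<in> localize_at_max p" using localize_at_maxI ab by simp
qed

lemma one_notin_localize_at_max: "1 \<notin> localize_at_max p"
proof
  assume "1 \<in> localize_at_max p"
  then obtain a s where ab: "Fraction_Field.Fract 1 1 = Fraction_Field.Fract a s" "a \<in> p" "s \<notin> p"
    by (metis localize_at_maxE One_fract_def)
  then have "s = a" using denominator_nonzero[OF ab(3)] by (simp add: eq_fract)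
  then show False using ab by blast
qed

lemma inverse_one_minus_in_localize_at:
  assumes "v \<in> localize_at_max p"
  shows "inverse (1 - v) \<in> localize_at p"
proof -
  obtain a s where ab: "v = Fraction_Field.Fract a s" "a \<in> p" "s \<notin> p"
    using assms by (rule localize_at_maxE)
  have "s - a \<notin> p"
    using ab ideal_in_add[OF pI, of "s - a" a] by auto
  moreover have "1 - v = Fraction_Field.Fract (s - a) s"
    using denominator_nonzero ab by (simp add: One_fract_def)
  ultimately show ?thesis using localize_atI by simp
qed

end

lemma going_down_if_contractions_below_height_one:
  assumes p: "height_one_prime p" and S: "subring_of S"
    and below: "\<And>Q. prime_in S Q \<Longrightarrow> contract Q \<subseteq> p"
  shows "going_down S"
  unfolding going_down_def
proof (intro allI impI)
  fix p' q Q
  assume h: "prime_in UNIV p' \<and> prime_in UNIV q \<and> p' \<subset> q \<and> prime_in S Q \<and> contract Q = q"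
  have "0 \<in> p'" using h ideal_in_zero prime_in_ideal by blast
  then have "{0} \<subset> q" using h by blast
  moreover have "q \<subseteq> p" using h below by blast
  ultimately have "q = p" using p h unfolding height_one_prime_def by blast
  then have "p' = {0}" using p h \<open>0 \<in> p'\<close> unfolding height_one_prime_def by blast
  moreover have "{0} \<subseteq> Q" using h ideal_in_zero prime_in_ideal by blast
  ultimately show "\<exists>P. prime_in S P \<and> P \<subseteq> Q \<and> contract P = p'"
    using prime_in_zero[OF S] contract_zero by blast
qed

lemma localization_subset_localize_at:
  assumes M: "multiplicative M" and N: "ideal_in (localization M) N" "1 \<notin> N"
    and p: "p \<subseteq> contract N"
  shows "localization M \<subseteq> localize_at p"
proof
  fix x assume "x \<in> localization M"
  then obtain c s where x: "x = Fraction_Field.Fract c s" and s: "s \<in> M"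
    unfolding localization_def by blast
  have "s \<notin> p"
  proof
    assume "s \<in> p"
    then have "Fraction_Field.Fract 1 s * emb s \<in> N"
      using ideal_in_mult_left[OF N(1)] s p unfolding localization_def contract_def by blast
    moreover have "s \<noteq> 0" using M s unfolding multiplicative_def by blast
    then have "Fraction_Field.Fract 1 s * emb s = 1" by (simp add: emb_def One_fract_def eq_fract)
    ultimately show False using N(2) by simp
  qed
  then show "x \<in> localize_at p" using x localize_atI by blast
qed

lemma contract_localize_subring_max:
  assumes p: "prime_in UNIV p" and B: "subring_of B" and Q: "prime_in B Q"
    and AB: "localize_at p \<subseteq> B" and mQ: "localize_at_max p \<subseteq> Q"
  shows "contract (localize_subring_max B Q) = p"
proof
  show "p \<subseteq> contract (localize_subring_max B Q)"
  proof
    fix a assume "a \<in> p"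
    then have "emb a \<in> Q"
      using localize_at_maxI[OF _ one_notin_prime[OF p]] mQ unfolding emb_def by blast
    then show "a \<in> contract (localize_subring_max B Q)"
      using subset_localize_subring_max[OF B Q] unfolding contract_def by blast
  qed
  show "contract (localize_subring_max B Q) \<subseteq> p"
  proof
    fix a assume a: "a \<in> contract (localize_subring_max B Q)"
    show "a \<in> p"
    proof (rule ccontr)
      assume "a \<notin> p"
      then have "a \<noteq> 0" using ideal_in_zero[OF prime_in_ideal[OF p]] by blast
      then have "emb a \<noteq> 0" by (simp add: emb_def Zero_fract_def eq_fract)
      moreover have "inverse (emb a) \<in> B" using inverse_emb_in_localize_at[OF p \<open>a \<notin> p\<close>] AB by blast
      ultimately show False
        using unit_notin_localize_subring_max[OF B Q] a unfolding contract_def by blast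
    qed
  qed
qed

lemma localize_subring_subset_localize_at:
  assumes per: "perinormal TYPE('a::idom)" and p: "height_one_prime (p :: 'a set)"
    and B: "subring_of B" and Q: "prime_in B Q"
    and AB: "localize_at p \<subseteq> B" and mQ: "localize_at_max p \<subseteq> Q"
  shows "localize_subring B Q \<subseteq> localize_at p"
proof -
  have pP: "prime_in UNIV p" using p by (simp add: height_one_prime_def)
  define S where "S = localize_subring B Q"
  define N where "N = localize_subring_max B Q"
  have S: "subring_of S" unfolding S_def using B Q by (rule subring_of_localize_subring)
  have contract_N: "contract N = p" unfolding N_def using pP B Q AB mQ by (rule contract_localize_subring_max)
  have "overring S"
    unfolding overring_def using S AB subset_localize_subring[OF B Q] emb_in_localize_at[OF pP]
    unfolding S_def by blast
  moreover have "local_ring S" unfolding S_def using B Q by (rule local_ring_localize_subring)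
  moreover have "going_down S"
    using going_down_if_contractions_below_height_one[OF p S] contract_N
      prime_in_localize_subring_subset[OF B Q] unfolding S_def N_def contract_def by blast
  ultimately obtain M where M: "multiplicative M" "S = localization M"
    using per unfolding perinormal_def is_localization_def by blast
  have "ideal_in (localization M) N" "1 \<notin> N"
    using ideal_in_localize_subring_max[OF B Q] one_notin_localize_subring_max[OF B Q] M(2)
    unfolding S_def N_def by simp_all
  then show ?thesis
    using localization_subset_localize_at[OF M(1)] contract_N M(2) unfolding S_def by simp
qed

lemma in_localize_at_if_one_notin_poly_values:
  assumes per: "perinormal TYPE('a::idom)" and p: "height_one_prime (p :: 'a set)"
    and y: "1 \<notin> poly_values (localize_at_max p) y"
  shows "y \<in> localize_at p"
proof -
  have pP: "prime_in UNIV p" using p by (simp add: height_one_prime_def)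
  define A where "A = localize_at p"
  define B where "B = poly_values A y"
  have A: "subring_of A" unfolding A_def using pP by (rule subring_of_localize_at)
  have B: "subring_of B" unfolding B_def using A by (rule subring_of_poly_values)
  have AB: "A \<subseteq> B" unfolding B_def using subset_poly_values subring_of_zero[OF A] by blast
  have m: "ideal_in A (localize_at_max p)" unfolding A_def using pP by (rule ideal_in_localize_at_max)
  obtain Q where Q: "prime_in B Q" and mQ: "poly_values (localize_at_max p) y \<subseteq> Q"
    using prime_in_containing_ideal[OF B _ y] ideal_in_poly_values[OF m] unfolding B_def by blast
  have "localize_at_max p \<subseteq> Q"
    using subset_poly_values[OF ideal_in_zero[OF m]] mQ by blast
  then have "localize_subring B Q \<subseteq> localize_at p"
    using localize_subring_subset_localize_at[OF per p B Q] AB unfolding A_def by blast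
  moreover have "y \<in> B"
    unfolding B_def using A by (intro var_in_poly_values subring_of_zero subring_of_one)
  ultimately show ?thesis using subset_localize_subring[OF B Q] by blast
qed

theorem proposition3p2:
  assumes "perinormal TYPE('a::idom)"
    and "height_one_prime (p :: 'a set)"
  shows "valuation_ring (localize_at p)"
  unfolding valuation_ring_def
proof (intro conjI allI impI)
  have p: "prime_in UNIV p" using assms(2) by (simp add: height_one_prime_def)
  show "subring_of (localize_at p)" using p by (rule subring_of_localize_at)
  fix x :: "'a fract" assume "x \<noteq> 0"
  then have "1 \<notin> poly_values (localize_at_max p) x \<or> 1 \<notin> poly_values (localize_at_max p) (inverse x)"
    using one_notin_poly_values_or_inverse[OF subring_of_localize_at[OF p]
        ideal_in_localize_at_max[OF p] one_notin_localize_at_max[OF p]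
        inverse_one_minus_in_localize_at[OF p]]
    by blast
  then show "x \<in> localize_at p \<or> inverse x \<in> localize_at p"
    using in_localize_at_if_one_notin_poly_values[OF assms] by blast
qed

end
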